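(* Fix a valid ILA model and a secret parameter $\mathsf{sp}\in\mathcal{SP}$. Suppose $\mathsf{topub}(\mathsf{sp});\Gamma\vdash e:\tau$ and $\mathsf{sp};\Gamma\vDash\gamma$. Then there are values $v$ and $v_{\mathsf{msg}}$ with $\langle\gamma,e\rangle\Downarrow v$ and $\langle\mathsf{interp}^{\mathsf{sp}}_\Gamma(\gamma),e\rangle\Downarrow^{\mathsf{sp}}_{\mathsf{msg}}v_{\mathsf{msg}}$ such that $\mathsf{interp}^{\mathsf{sp}}_{\mathsf{sort}(v)}(v)=v_{\mathsf{msg}}$.
   Context: An ILA model consists of: sets $\mathcal{PP}$ (public parameters) and $\mathcal{SP}$ (secret parameters) with a map $\mathsf{topub}:\mathcal{SP}\to\mathcal{PP}$; for each sort $s\in\{\mathsf{msg},\mathsf{plain},\mathsf{cipher}\}$ a carrier set $[\![s]\!]$ (the sort of a value $v$, written $\mathsf{sort}(v)$, is the $s$ with $v\in[\![s]\!]$) and a partially ordered set $(B_s,\le_s)$ of bounds; maps $|\cdot|^{\mathsf{pp}}_{\mathsf{msg}}:[\![\mathsf{msg}]\!]\to B_{\mathsf{msg}}$, $|\cdot|^{\mathsf{pp}}_{\mathsf{plain}}:[\![\mathsf{plain}]\!]\to B_{\mathsf{plain}}$ for $\mathsf{pp}\in\mathcal{PP}$, and $|\cdot|^{\mathsf{sp}}_{\mathsf{cipher}}:[\![\mathsf{cipher}]\!]\to B_{\mathsf{cipher}}$ for $\mathsf{sp}\in\mathcal{SP}$ (for $s\in\{\mathsf{msg},\mathsf{plain}\}$,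 $|\cdot|^{\mathsf{sp}}_s$ means $|\cdot|^{\mathsf{topub}(\mathsf{sp})}_s$); interpretation maps $\mathsf{interp}^{\mathsf{pp}}_{\mathsf{plain}}:[\![\mathsf{plain}]\!]\to[\![\mathsf{msg}]\!]$ (decoding), $\mathsf{interp}^{\mathsf{sp}}_{\mathsf{cipher}}:[\![\mathsf{cipher}]\!]\to[\![\mathsf{msg}]\!]$ (decryption), with $\mathsf{interp}^{\mathsf{pp}}_{\mathsf{msg}}$ the identity and $\mathsf{interp}^{\mathsf{sp}}_s:=\mathsf{interp}^{\mathsf{topub}(\mathsf{sp})}_s$ for $s\in\{\mathsf{msg},\mathsf{plain}\}$; and a set of operations, each $\mathsf{op}$ having an arity $s_1,\dots,s_n\to s$ and equipped with a total function $[\![\mathsf{op}]\!]:\prod_i[\![s_i]\!]\to[\![s]\!]$, a partial function $[\![\mathsf{op}]\!]^{\mathsf{pp}}_{\mathsf{bnd}}:\prod_i B_{s_i}\rightharpoonup B_s$ for each $\mathsf{pp}$, and a function $[\![\mathsf{op}]\!]_{\mathsf{msg}}:[\![\mathsf{msg}]\!]^n\to[\![\mathsf{msg}]\!]$. The model is valid if (Commutativity) for all $\mathsf{sp}$, all $\mathsf{op}:\vec s_i\to s$ and all $v_i\in[\![s_i]\!]$, if $[\![\mathsf{op}]\!]^{\mathsf{topub}(\mathsf{sp})}_{\mathsf{bnd}}(|v_1|^{\mathsf{sp}}_{s_1},\dots)=b$ is defined then $|[\![\mathsf{op}]\!](\vec v_i)|^{\mathsf{sp}}_s\le_s b$ and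 $\mathsf{interp}^{\mathsf{sp}}_s([\![\mathsf{op}]\!](\vec v_i))=[\![\mathsf{op}]\!]_{\mathsf{msg}}(\mathsf{interp}^{\mathsf{sp}}_{s_1}(v_1),\dots)$; and (Downwards Closed) if $[\![\mathsf{op}]\!]^{\mathsf{topub}(\mathsf{sp})}_{\mathsf{bnd}}(\vec b_i)=b$ is defined and $b_i'\le_{s_i}b_i$ for all $i$, then $[\![\mathsf{op}]\!]^{\mathsf{topub}(\mathsf{sp})}_{\mathsf{bnd}}(\vec b_i')=b'$ is defined with $b'\le_s b$. Expressions: $e::=x\mid v\mid\mathsf{op}(e_1,\dots,e_n)$ with $v\in[\![s]\!]$, $s\in\{\mathsf{msg},\mathsf{plain}\}$. A substitution $\gamma$ maps variables to values in $[\![\mathsf{msg}]\!]\cup[\![\mathsf{plain}]\!]\cup[\![\mathsf{cipher}]\!]$. Ordinary evaluation $\langle\gamma,e\rangle\Downarrow v$: $\langle\gamma,x\rangle\Downarrow\gamma(x)$; $\langle\gamma,v\rangle\Downarrow v$; if $\mathsf{op}:\vec s_i\to s$ and $\langle\gamma,e_i\rangle\Downarrow v_i\in[\![s_i]\!]$ for all $i$, then $\langle\gamma,\mathsf{op}(\vec e_i)\rangle\Downarrow[\![\mathsf{op}]\!](\vec v_i)$. Cleartext evaluation $\langle\gamma,e\rangle\Downarrow^{\mathsf{sp}}_{\mathsf{msg}}v$ (for substitutions into $[\![\mathsf{msg}]\!]$): $\langle\gamma,x\rangle\Downarrow^{\mathsf{sp}}_{\mathsf{msg}}\gamma(x)$;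 for $v\in[\![s]\!]$, $\langle\gamma,v\rangle\Downarrow^{\mathsf{sp}}_{\mathsf{msg}}\mathsf{interp}^{\mathsf{sp}}_s(v)$; if $\mathsf{op}:\vec s_i\to s$ and $\langle\gamma,e_i\rangle\Downarrow^{\mathsf{sp}}_{\mathsf{msg}}v_i$ for all $i$, then $\langle\gamma,\mathsf{op}(\vec e_i)\rangle\Downarrow^{\mathsf{sp}}_{\mathsf{msg}}[\![\mathsf{op}]\!]_{\mathsf{msg}}(\vec v_i)$. Types are $s\ \alpha$ with $\alpha\in B_s$; $|s\ \alpha|=\alpha$, $\mathsf{sort}(s\ \alpha)=s$; $s\ \alpha\le s\ \alpha'$ iff $\alpha\le_s\alpha'$. A context $\Gamma$ is a finite map from variables to types. Typing $\mathsf{pp};\Gamma\vdash e:\tau$: if $x:\tau\in\Gamma$ then $\mathsf{pp};\Gamma\vdash x:\tau$; if $\mathsf{pp};\Gamma\vdash e:\tau$ and $\tau\le\tau'$ then $\mathsf{pp};\Gamma\vdash e:\tau'$; if $\mathsf{sort}(v)=s$ then $\mathsf{pp};\Gamma\vdash v:s\ |v|^{\mathsf{pp}}_s$; if $\mathsf{op}:\vec s_i\to s$, $\mathsf{pp};\Gamma\vdash e_i:\tau_i$ with $\mathsf{sort}(\tau_i)=s_i$, and $[\![\mathsf{op}]\!]^{\mathsf{pp}}_{\mathsf{bnd}}(|\tau_1|,\dots,|\tau_n|)=\alpha$ is defined, then $\mathsf{pp};\Gamma\vdash\mathsf{op}(\vec e_i):s\ \alpha$. Semantic types: $[\![s\ \alpha]\!]^{\mathsf{sp}}=\{v\in[\![s]\!]\mid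 |v|^{\mathsf{sp}}_s\le_s\alpha\}$. $\mathsf{sp};\Gamma\vDash\gamma$ means: for every $x$ in the domain of $\Gamma$, $x$ is in the domain of $\gamma$ and $\gamma(x)\in[\![\Gamma(x)]\!]^{\mathsf{sp}}$. For such $\gamma$, $\mathsf{interp}^{\mathsf{sp}}_\Gamma(\gamma)$ is the substitution $\{x\mapsto\mathsf{interp}^{\mathsf{sp}}_{\mathsf{sort}(\Gamma(x))}(\gamma(x))\}$ over the variables $x$ of $\Gamma$. *)

theory Defs
  imports Main
begin

datatype sort = SMsg | SPlain | SCipher

datatype ('m, 'p, 'c) val = VMsg 'm | VPlain 'p | VCipher 'c

fun sort_of_val :: "('m, 'p, 'c) val \<Rightarrow> sort" where
  "sort_of_val (VMsg _) = SMsg"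
| "sort_of_val (VPlain _) = SPlain"
| "sort_of_val (VCipher _) = SCipher"

text \<open>Bounds, tagged with their sort. A type \<open>s \<alpha>\<close> (with \<open>\<alpha> \<in> B_s\<close>) is exactly such a
  tagged bound; \<open>|s \<alpha>| = \<alpha>\<close>.\<close>
datatype ('bm, 'bp, 'bc) bnd = BMsg 'bm | BPlain 'bp | BCipher 'bc

fun sort_of_bnd :: "('bm, 'bp, 'bc) bnd \<Rightarrow> sort" where
  "sort_of_bnd (BMsg _) = SMsg"
| "sort_of_bnd (BPlain _) = SPlain"
| "sort_of_bnd (BCipher _) = SCipher"

record ('pp, 'sp, 'm, 'p, 'c, 'bm, 'bp, 'bc, 'op) ila =
  topub :: "'sp \<Rightarrow> 'pp"
  le_msg :: "'bm \<Rightarrow> 'bm \<Rightarrow> bool"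
  le_plain :: "'bp \<Rightarrow> 'bp \<Rightarrow> bool"
  le_cipher :: "'bc \<Rightarrow> 'bc \<Rightarrow> bool"
  size_msg :: "'pp \<Rightarrow> 'm \<Rightarrow> 'bm"
  size_plain :: "'pp \<Rightarrow> 'p \<Rightarrow> 'bp"
  size_cipher :: "'sp \<Rightarrow> 'c \<Rightarrow> 'bc"
  interp_plain :: "'pp \<Rightarrow> 'p \<Rightarrow> 'm"
  interp_cipher :: "'sp \<Rightarrow> 'c \<Rightarrow> 'm"
  arity :: "'op \<Rightarrow> sort list \<times> sort"
  op_sem :: "'op \<Rightarrow> ('m, 'p, 'c) val list \<Rightarrow> ('m, 'p, 'c) val"
  op_bnd :: "'pp \<Rightarrow> 'op \<Rightarrow> ('bm, 'bp, 'bc) bnd list \<Rightarrow> ('bm, 'bp, 'bc) bnd option"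
  op_msg :: "'op \<Rightarrow> 'm list \<Rightarrow> 'm"

fun le_bnd :: "('pp, 'sp, 'm, 'p, 'c, 'bm, 'bp, 'bc, 'op) ila \<Rightarrow>
    ('bm, 'bp, 'bc) bnd \<Rightarrow> ('bm, 'bp, 'bc) bnd \<Rightarrow> bool" where
  "le_bnd M (BMsg a) (BMsg b) = le_msg M a b"
| "le_bnd M (BPlain a) (BPlain b) = le_plain M a b"
| "le_bnd M (BCipher a) (BCipher b) = le_cipher M a b"
| "le_bnd M _ _ = False"

fun size_sp :: "('pp, 'sp, 'm, 'p, 'c, 'bm, 'bp, 'bc, 'op) ila \<Rightarrow> 'sp \<Rightarrow>
    ('m, 'p, 'c) val \<Rightarrow> ('bm, 'bp, 'bc) bnd" where
  "size_sp M sp (VMsg m) = BMsg (size_msg M (topub M sp) m)"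
| "size_sp M sp (VPlain p) = BPlain (size_plain M (topub M sp) p)"
| "size_sp M sp (VCipher c) = BCipher (size_cipher M sp c)"

fun size_pp :: "('pp, 'sp, 'm, 'p, 'c, 'bm, 'bp, 'bc, 'op) ila \<Rightarrow> 'pp \<Rightarrow>
    ('m, 'p, 'c) val \<Rightarrow> ('bm, 'bp, 'bc) bnd option" where
  "size_pp M pp (VMsg m) = Some (BMsg (size_msg M pp m))"
| "size_pp M pp (VPlain p) = Some (BPlain (size_plain M pp p))"
| "size_pp M pp (VCipher c) = None"

fun interp_sp :: "('pp, 'sp, 'm, 'p, 'c, 'bm, 'bp, 'bc, 'op) ila \<Rightarrow> 'sp \<Rightarrow>
    ('m, 'p, 'c) val \<Rightarrow> 'm" where
  "interp_sp M sp (VMsg m) = m"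
| "interp_sp M sp (VPlain p) = interp_plain M (topub M sp) p"
| "interp_sp M sp (VCipher c) = interp_cipher M sp c"

text \<open>Structural requirements that are part of the definition of an ILA model:
  each \<open>B_s\<close> is partially ordered, \<open>[[op]]\<close> maps \<open>\<Prod>[[s_i]]\<close> to \<open>[[s]]\<close> and
  \<open>[[op]]^pp_bnd\<close> maps (partially) \<open>\<Prod>B_{s_i}\<close> to \<open>B_s\<close>.\<close>
definition ila_wf :: "('pp, 'sp, 'm, 'p, 'c, 'bm, 'bp, 'bc, 'op) ila \<Rightarrow> bool" where
  "ila_wf M \<longleftrightarrow>
     reflp (le_msg M) \<and> transp (le_msg M) \<and> antisymp (le_msg M) \<and>
     reflp (le_plain M) \<and> transp (le_plain M) \<and> antisymp (le_plain M) \<and>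
     reflp (le_cipher M) \<and> transp (le_cipher M) \<and> antisymp (le_cipher M) \<and>
     (\<forall>op ss s vs. arity M op = (ss, s) \<longrightarrow> list_all2 (\<lambda>v si. sort_of_val v = si) vs ss \<longrightarrow>
        sort_of_val (op_sem M op vs) = s) \<and>
     (\<forall>pp op ss s bs b. arity M op = (ss, s) \<longrightarrow> list_all2 (\<lambda>b si. sort_of_bnd b = si) bs ss \<longrightarrow>
        op_bnd M pp op bs = Some b \<longrightarrow> sort_of_bnd b = s)"

definition ila_commutativity :: "('pp, 'sp, 'm, 'p, 'c, 'bm, 'bp, 'bc, 'op) ila \<Rightarrow> bool" where
  "ila_commutativity M \<longleftrightarrow>
     (\<forall>sp op ss s vs b. arity M op = (ss, s) \<longrightarrow> list_all2 (\<lambda>v si. sort_of_val v = si) vs ss \<longrightarrow>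
        op_bnd M (topub M sp) op (map (size_sp M sp) vs) = Some b \<longrightarrow>
          le_bnd M (size_sp M sp (op_sem M op vs)) b \<and>
          interp_sp M sp (op_sem M op vs) = op_msg M op (map (interp_sp M sp) vs))"

definition ila_downwards_closed :: "('pp, 'sp, 'm, 'p, 'c, 'bm, 'bp, 'bc, 'op) ila \<Rightarrow> bool" where
  "ila_downwards_closed M \<longleftrightarrow>
     (\<forall>sp op ss s bs bs' b. arity M op = (ss, s) \<longrightarrow> list_all2 (\<lambda>b si. sort_of_bnd b = si) bs ss \<longrightarrow>
        op_bnd M (topub M sp) op bs = Some b \<longrightarrow> list_all2 (le_bnd M) bs' bs \<longrightarrow>
        (\<exists>b'. op_bnd M (topub M sp) op bs' = Some b' \<and> le_bnd M b' b))"

definition ila_valid :: "('pp, 'sp, 'm, 'p, 'c, 'bm, 'bp, 'bc, 'op) ila \<Rightarrow> bool" where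
  "ila_valid M \<longleftrightarrow> ila_wf M \<and> ila_commutativity M \<and> ila_downwards_closed M"

datatype ('x, 'm, 'p, 'op) expr =
    Var 'x
  | CMsg 'm
  | CPlain 'p
  | Op 'op "('x, 'm, 'p, 'op) expr list"

inductive eval :: "('pp, 'sp, 'm, 'p, 'c, 'bm, 'bp, 'bc, 'op) ila \<Rightarrow>
    ('x \<Rightarrow> ('m, 'p, 'c) val option) \<Rightarrow> ('x, 'm, 'p, 'op) expr \<Rightarrow> ('m, 'p, 'c) val \<Rightarrow> bool"
  for M where
  eval_var: "\<gamma> x = Some v \<Longrightarrow> eval M \<gamma> (Var x) v"
| eval_msg: "eval M \<gamma> (CMsg m) (VMsg m)"
| eval_plain: "eval M \<gamma> (CPlain p) (VPlain p)"
| eval_op: "arity M op = (ss, s) \<Longrightarrow> list_all2 (eval M \<gamma>) es vs \<Longrightarrow>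
     list_all2 (\<lambda>v si. sort_of_val v = si) vs ss \<Longrightarrow> eval M \<gamma> (Op op es) (op_sem M op vs)"

inductive ceval :: "('pp, 'sp, 'm, 'p, 'c, 'bm, 'bp, 'bc, 'op) ila \<Rightarrow> 'sp \<Rightarrow>
    ('x \<Rightarrow> 'm option) \<Rightarrow> ('x, 'm, 'p, 'op) expr \<Rightarrow> 'm \<Rightarrow> bool"
  for M sp where
  ceval_var: "\<gamma> x = Some m \<Longrightarrow> ceval M sp \<gamma> (Var x) m"
| ceval_msg: "ceval M sp \<gamma> (CMsg m) (interp_sp M sp (VMsg m))"
| ceval_plain: "ceval M sp \<gamma> (CPlain p) (interp_sp M sp (VPlain p))"
| ceval_op: "arity M op = (ss, s) \<Longrightarrow> length es = length ss \<Longrightarrow> list_all2 (ceval M sp \<gamma>) es ms \<Longrightarrow>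
     ceval M sp \<gamma> (Op op es) (op_msg M op ms)"

inductive has_type :: "('pp, 'sp, 'm, 'p, 'c, 'bm, 'bp, 'bc, 'op) ila \<Rightarrow> 'pp \<Rightarrow>
    ('x \<Rightarrow> ('bm, 'bp, 'bc) bnd option) \<Rightarrow> ('x, 'm, 'p, 'op) expr \<Rightarrow> ('bm, 'bp, 'bc) bnd \<Rightarrow> bool"
  for M pp where
  ty_var: "\<Gamma> x = Some \<tau> \<Longrightarrow> has_type M pp \<Gamma> (Var x) \<tau>"
| ty_sub: "has_type M pp \<Gamma> e \<tau> \<Longrightarrow> le_bnd M \<tau> \<tau>' \<Longrightarrow> has_type M pp \<Gamma> e \<tau>'"
| ty_msg: "has_type M pp \<Gamma> (CMsg m) (BMsg (size_msg M pp m))"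
| ty_plain: "has_type M pp \<Gamma> (CPlain p) (BPlain (size_plain M pp p))"
| ty_op: "arity M op = (ss, s) \<Longrightarrow> list_all2 (has_type M pp \<Gamma>) es \<tau>s \<Longrightarrow>
     map sort_of_bnd \<tau>s = ss \<Longrightarrow> op_bnd M pp op \<tau>s = Some \<alpha> \<Longrightarrow> sort_of_bnd \<alpha> = s \<Longrightarrow>
     has_type M pp \<Gamma> (Op op es) \<alpha>"

definition in_sem_type :: "('pp, 'sp, 'm, 'p, 'c, 'bm, 'bp, 'bc, 'op) ila \<Rightarrow> 'sp \<Rightarrow>
    ('bm, 'bp, 'bc) bnd \<Rightarrow> ('m, 'p, 'c) val \<Rightarrow> bool" where
  "in_sem_type M sp \<tau> v \<longleftrightarrow> sort_of_val v = sort_of_bnd \<tau> \<and> le_bnd M (size_sp M sp v) \<tau>"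

definition sem_ctx :: "('pp, 'sp, 'm, 'p, 'c, 'bm, 'bp, 'bc, 'op) ila \<Rightarrow> 'sp \<Rightarrow>
    ('x \<Rightarrow> ('bm, 'bp, 'bc) bnd option) \<Rightarrow> ('x \<Rightarrow> ('m, 'p, 'c) val option) \<Rightarrow> bool" where
  "sem_ctx M sp \<Gamma> \<gamma> \<longleftrightarrow>
     (\<forall>x \<tau>. \<Gamma> x = Some \<tau> \<longrightarrow> (\<exists>v. \<gamma> x = Some v \<and> in_sem_type M sp \<tau> v))"

text \<open>\<open>interp^sp_\<Gamma>(\<gamma>) = {x \<mapsto> interp^sp_{sort(\<Gamma> x)}(\<gamma> x) | x \<in> dom \<Gamma>}\<close>; under
  \<open>sp;\<Gamma> \<Turnstile> \<gamma>\<close> the sort of \<open>\<gamma> x\<close> is \<open>sort(\<Gamma> x)\<close>.\<close>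
definition interp_ctx :: "('pp, 'sp, 'm, 'p, 'c, 'bm, 'bp, 'bc, 'op) ila \<Rightarrow> 'sp \<Rightarrow>
    ('x \<Rightarrow> ('bm, 'bp, 'bc) bnd option) \<Rightarrow> ('x \<Rightarrow> ('m, 'p, 'c) val option) \<Rightarrow> ('x \<Rightarrow> 'm option)" where
  "interp_ctx M sp \<Gamma> \<gamma> = (\<lambda>x. case \<Gamma> x of None \<Rightarrow> None | Some \<tau> \<Rightarrow> map_option (interp_sp M sp) (\<gamma> x))"

end

theory Submission
  imports Defs
begin

text \<open>The proof is a logical-relations argument by induction on the typing derivation: a
  well-typed expression evaluates to a value of its semantic type, and cleartext evaluation
  under the decrypted substitution yields the interpretation of that value. Constants and
  variables are immediate and subsumption is transitivity of the bound order. For an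
  operation, the argument values have sizes below the argument types, so downwards closure
  makes the bound function defined on these sizes with a result below the type; commutativity
  then bounds the result value and makes interpretation commute with the operation.\<close>

lemma ila_valid_imp_wf: "ila_valid M \<Longrightarrow> ila_wf M"
  unfolding ila_valid_def by blast

lemma le_bnd_sort_eq: "le_bnd M a b \<Longrightarrow> sort_of_bnd a = sort_of_bnd b"
  by (cases a; cases b) auto

lemma le_bnd_refl: "ila_wf M \<Longrightarrow> le_bnd M a a"
  unfolding ila_wf_def by (cases a) (auto dest: reflpD)

lemma le_bnd_trans: "ila_wf M \<Longrightarrow> le_bnd M a b \<Longrightarrow> le_bnd M b c \<Longrightarrow> le_bnd M a c"
  unfolding ila_wf_def by (cases a; cases b; cases c) (auto dest: transpD)

lemma in_sem_type_size: "ila_wf M \<Longrightarrow> in_sem_type M sp (size_sp M sp v) v"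
  unfolding in_sem_type_def using le_bnd_refl[of M "size_sp M sp v"] by (cases v) auto

lemma in_sem_type_mono:
  "ila_wf M \<Longrightarrow> in_sem_type M sp \<tau> v \<Longrightarrow> le_bnd M \<tau> \<tau>' \<Longrightarrow> in_sem_type M sp \<tau>' v"
  unfolding in_sem_type_def by (metis le_bnd_sort_eq le_bnd_trans)

lemma sem_ctx_lookup:
  assumes "sem_ctx M sp \<Gamma> \<gamma>" and "\<Gamma> x = Some \<tau>"
  obtains v where "\<gamma> x = Some v" "in_sem_type M sp \<tau> v"
    and "interp_ctx M sp \<Gamma> \<gamma> x = Some (interp_sp M sp v)"
  using assms unfolding sem_ctx_def interp_ctx_def by auto

lemma in_sem_types_sorts:
  "list_all2 (\<lambda>v \<tau>. in_sem_type M sp \<tau> v) vs \<tau>s \<Longrightarrow> map sort_of_bnd \<tau>s = ss \<Longrightarrow>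
   list_all2 (\<lambda>v si. sort_of_val v = si) vs ss"
  by (auto simp: list_all2_conv_all_nth in_sem_type_def)

lemma in_sem_type_op_sem:
  assumes valid: "ila_valid M"
    and arity: "arity M op = (ss, s)"
    and sorts: "map sort_of_bnd \<tau>s = ss"
    and bnd: "op_bnd M (topub M sp) op \<tau>s = Some \<alpha>"
    and args: "list_all2 (\<lambda>v \<tau>. in_sem_type M sp \<tau> v) vs \<tau>s"
  shows "in_sem_type M sp \<alpha> (op_sem M op vs)"
    and "interp_sp M sp (op_sem M op vs) = op_msg M op (map (interp_sp M sp) vs)"
proof -
  have wf: "ila_wf M" and comm: "ila_commutativity M" and down: "ila_downwards_closed M"
    using valid unfolding ila_valid_def by blast+
  have bnd_sorts: "list_all2 (\<lambda>b si. sort_of_bnd b = si) \<tau>s ss"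
    using sorts by (auto simp: list_all2_conv_all_nth)
  have val_sorts: "list_all2 (\<lambda>v si. sort_of_val v = si) vs ss"
    using args sorts by (rule in_sem_types_sorts)
  have sizes: "list_all2 (le_bnd M) (map (size_sp M sp) vs) \<tau>s"
    using args by (auto simp: list_all2_conv_all_nth in_sem_type_def)
  obtain \<beta> where \<beta>: "op_bnd M (topub M sp) op (map (size_sp M sp) vs) = Some \<beta>" "le_bnd M \<beta> \<alpha>"
    using down arity bnd_sorts bnd sizes unfolding ila_downwards_closed_def by blast
  have size_le: "le_bnd M (size_sp M sp (op_sem M op vs)) \<beta>"
    and interp_op: "interp_sp M sp (op_sem M op vs) = op_msg M op (map (interp_sp M sp) vs)"
    using comm arity val_sorts \<beta>(1) unfolding ila_commutativity_def by blast+
  show "interp_sp M sp (op_sem M op vs) = op_msg M op (map (interp_sp M sp) vs)"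
    by (fact interp_op)
  have "sort_of_val (op_sem M op vs) = s" "sort_of_bnd \<alpha> = s"
    using wf arity val_sorts bnd_sorts bnd unfolding ila_wf_def by blast+
  then show "in_sem_type M sp \<alpha> (op_sem M op vs)"
    unfolding in_sem_type_def using le_bnd_trans[OF wf size_le \<beta>(2)] by simp
qed

lemma has_type_sound:
  assumes valid: "ila_valid M"
    and "has_type M (topub M sp) \<Gamma> e \<tau>"
    and "sem_ctx M sp \<Gamma> \<gamma>"
  shows "\<exists>v. eval M \<gamma> e v \<and> ceval M sp (interp_ctx M sp \<Gamma> \<gamma>) e (interp_sp M sp v) \<and>
           in_sem_type M sp \<tau> v"
  using assms(2,3)
proof (induction rule: has_type.induct)
  case (ty_var \<Gamma> x \<tau>)
  obtain v where "\<gamma> x = Some v" "in_sem_type M sp \<tau> v"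
    and "interp_ctx M sp \<Gamma> \<gamma> x = Some (interp_sp M sp v)"
    by (rule sem_ctx_lookup[OF ty_var.prems ty_var.hyps])
  then show ?case by (blast intro: eval_var ceval_var)
next
  case (ty_sub \<Gamma> e \<tau> \<tau>')
  then show ?case using ila_valid_imp_wf[OF valid] by (blast intro: in_sem_type_mono)
next
  case (ty_msg \<Gamma> m)
  have "in_sem_type M sp (size_sp M sp (VMsg m)) (VMsg m)"
    using ila_valid_imp_wf[OF valid] by (rule in_sem_type_size)
  moreover have "eval M \<gamma> (CMsg m) (VMsg m)" by (rule eval_msg)
  moreover have "ceval M sp (interp_ctx M sp \<Gamma> \<gamma>) (CMsg m) (interp_sp M sp (VMsg m))"
    by (rule ceval_msg)
  ultimately show ?case by auto
next
  case (ty_plain \<Gamma> p)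
  have "in_sem_type M sp (size_sp M sp (VPlain p)) (VPlain p)"
    using ila_valid_imp_wf[OF valid] by (rule in_sem_type_size)
  moreover have "eval M \<gamma> (CPlain p) (VPlain p)" by (rule eval_plain)
  moreover have "ceval M sp (interp_ctx M sp \<Gamma> \<gamma>) (CPlain p) (interp_sp M sp (VPlain p))"
    by (rule ceval_plain)
  ultimately show ?case by auto
next
  case (ty_op op ss s \<Gamma> es \<tau>s \<alpha>)
  let ?\<gamma>\<^sub>m = "interp_ctx M sp \<Gamma> \<gamma>"
  have "list_all2 ((\<lambda>e v. eval M \<gamma> e v \<and> ceval M sp ?\<gamma>\<^sub>m e (interp_sp M sp v)) OO
      (\<lambda>v \<tau>. in_sem_type M sp \<tau> v)) es \<tau>s"
    using ty_op.IH ty_op.prems by (auto elim!: list_all2_mono)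
  then obtain vs where
      evals: "list_all2 (\<lambda>e v. eval M \<gamma> e v \<and> ceval M sp ?\<gamma>\<^sub>m e (interp_sp M sp v)) es vs"
    and args: "list_all2 (\<lambda>v \<tau>. in_sem_type M sp \<tau> v) vs \<tau>s"
    unfolding list.rel_compp by blast
  have sorts: "list_all2 (\<lambda>v si. sort_of_val v = si) vs ss"
    using args \<open>map sort_of_bnd \<tau>s = ss\<close> by (rule in_sem_types_sorts)
  have "eval M \<gamma> (Op op es) (op_sem M op vs)"
    using \<open>arity M op = (ss, s)\<close> evals sorts by (auto intro: eval_op elim: list_all2_mono)
  moreover have "ceval M sp ?\<gamma>\<^sub>m (Op op es) (op_msg M op (map (interp_sp M sp) vs))"
  proof (rule ceval_op[OF \<open>arity M op = (ss, s)\<close>])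
    show "length es = length ss"
      using evals sorts by (auto dest!: list_all2_lengthD)
    show "list_all2 (ceval M sp ?\<gamma>\<^sub>m) es (map (interp_sp M sp) vs)"
      using evals by (auto simp: list.rel_map elim: list_all2_mono)
  qed
  ultimately show ?case
    using in_sem_type_op_sem[OF valid ty_op.hyps(1) \<open>map sort_of_bnd \<tau>s = ss\<close> ty_op.hyps(3) args]
    by auto
qed

theorem mainTheorem3:
  fixes M :: "('pp, 'sp, 'm, 'p, 'c, 'bm, 'bp, 'bc, 'op) ila"
    and sp :: 'sp
    and \<Gamma> :: "'x \<Rightarrow> ('bm, 'bp, 'bc) bnd option"
    and \<gamma> :: "'x \<Rightarrow> ('m, 'p, 'c) val option"
    and e :: "('x, 'm, 'p, 'op) expr"
    and \<tau> :: "('bm, 'bp, 'bc) bnd"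
  assumes "ila_valid M"
    and "has_type M (topub M sp) \<Gamma> e \<tau>"
    and "sem_ctx M sp \<Gamma> \<gamma>"
  shows "\<exists>v v_msg. eval M \<gamma> e v \<and> ceval M sp (interp_ctx M sp \<Gamma> \<gamma>) e v_msg \<and>
           interp_sp M sp v = v_msg"
  using has_type_sound[OF assms] by blast

end
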